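(* Let $K>3$, $V\ge1$, let $\phi_1,\dots,\phi_K\in\Delta_{V-1}$ have strictly positive entries, $p\in\Delta_{V-1}$, and $H(\theta)=\sum_{v=1}^Vp_v\log\big(\sum_{k=1}^K\theta_k\phi_k(v)\big)$. Let $\theta^*$ be a maximizer of $H$ on $\Delta_{K-1}$ with all coordinates strictly positive. Assume (B1): for every $v$, $\max_k\phi_k(v)$ is attained at a unique index $k(v)$; and that $\phi$ is $\varepsilon$-sparse with $\varepsilon<\varepsilon_0$. Then $$\rho^2:=\frac{|\det Q|^{1/2}|\det R|^{1/2}}{\left|\det\!\left(\frac{Q+R}{2}\right)\right|}\ \ge\ \exp(-C^2\varepsilon^2),$$ where $Q=\nabla^2H(\theta^* )$, $R=-\mathrm{diag}(1/\theta^*_1,\dots,1/\theta^*_K)$, and $C>0$ is a constant depending only on $\theta^*$, $K$ and $\varepsilon_0$.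
   Context: $\Delta_{d-1}=\{x\in\mathbb{R}^d:x_i\ge0,\sum_ix_i=1\}$. $\phi$ is $\varepsilon$-sparse if $\varepsilon=\max_v\frac{\sum_{j\ne k(v)}\phi_j(v)}{\phi_{k(v)}(v)}$. Let $\theta^*_{\min}=\min_k\theta^*_k$, $\theta^*_{\max}=\max_k\theta^*_k$, $C^{(1)}_{\max}=(\theta^*_{\max})^{1/2}/(\theta^*_{\min})^{3/2}$, $C^{(2)}_{\max}=\theta^*_{\max}/(\theta^*_{\min})^2$, and $F(\varepsilon)=4(C^{(2)}_{\max})^2K+K(K-1)\big(2C^{(1)}_{\max}+C^{(2)}_{\max}\varepsilon\big)^2$. The function $\varepsilon\mapsto\varepsilon\sqrt{F(\varepsilon)}$ is strictly increasing on $(0,\infty)$ and vanishes at $0$; $\varepsilon_0>0$ is the unique root of $\varepsilon\sqrt{F(\varepsilon)}=1/2$. *)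

theory Defs
  imports "HOL-Analysis.Analysis"
begin

text \<open>Probability simplex indexed by a finite type (the parameter space, K = CARD('k)).\<close>
definition simplexK :: "(real^'k) set" where
  "simplexK = {th. (\<forall>k. th $ k \<ge> 0) \<and> (\<Sum>k\<in>UNIV. th $ k) = 1}"

definition prob_vec :: "nat \<Rightarrow> (nat \<Rightarrow> real) \<Rightarrow> bool" where
  "prob_vec V x \<longleftrightarrow> (\<forall>v<V. x v \<ge> 0) \<and> (\<Sum>v<V. x v) = 1"

definition Hobj :: "nat \<Rightarrow> (nat \<Rightarrow> real) \<Rightarrow> ('k::finite \<Rightarrow> nat \<Rightarrow> real) \<Rightarrow> real^'k \<Rightarrow> real" where
  "Hobj V p phi th = (\<Sum>v<V. p v * ln (\<Sum>k\<in>UNIV. th $ k * phi k v))"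

definition hessian :: "(real^'n \<Rightarrow> real) \<Rightarrow> real^'n \<Rightarrow> real^'n^'n" where
  "hessian f x = (\<chi> i j. deriv (\<lambda>s. deriv (\<lambda>t. f (x + s *\<^sub>R axis i 1 + t *\<^sub>R axis j 1)) 0) 0)"

definition B1 :: "nat \<Rightarrow> ('k \<Rightarrow> nat \<Rightarrow> real) \<Rightarrow> bool" where
  "B1 V phi \<longleftrightarrow> (\<forall>v<V. \<exists>!k. \<forall>j. phi j v \<le> phi k v)"

definition kmax :: "('k \<Rightarrow> nat \<Rightarrow> real) \<Rightarrow> nat \<Rightarrow> 'k" where
  "kmax phi v = (THE k. \<forall>j. phi j v \<le> phi k v)"

definition sparsity :: "nat \<Rightarrow> ('k::finite \<Rightarrow> nat \<Rightarrow> real) \<Rightarrow> real" where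
  "sparsity V phi = Max ((\<lambda>v. (\<Sum>j\<in>UNIV - {kmax phi v}. phi j v) / phi (kmax phi v) v) ` {..<V})"

definition C1max :: "real^'k \<Rightarrow> real" where
  "C1max th = sqrt (Max (range (($) th))) / (Min (range (($) th))) powr (3/2)"

definition C2max :: "real^'k \<Rightarrow> real" where
  "C2max th = Max (range (($) th)) / (Min (range (($) th)))^2"

definition Ffun :: "real^'k \<Rightarrow> real \<Rightarrow> real" where
  "Ffun th e = 4 * (C2max th)^2 * real CARD('k)
     + real CARD('k) * (real CARD('k) - 1) * (2 * C1max th + C2max th * e)^2"

definition eps0 :: "real^'k \<Rightarrow> real" where
  "eps0 th = (THE e. e > 0 \<and> e * sqrt (Ffun th e) = 1/2)"

definition Rmat :: "real^'k \<Rightarrow> real^'k^'k" where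
  "Rmat th = (\<chi> i j. if i = j then - 1 / th $ i else 0)"

definition rho2 :: "real^'k^'k \<Rightarrow> real^'k^'k \<Rightarrow> real" where
  "rho2 Q R = sqrt \<bar>det Q\<bar> * sqrt \<bar>det R\<bar> / \<bar>det ((1/2) *\<^sub>R (Q + R))\<bar>"

end

theory Submission
  imports Defs "HOL-Computational_Algebra.Fundamental_Theorem_Algebra"
begin

text \<open>Congruence by \<open>D = diag (1 / \<surd>\<theta>\<^sup>*\<^sub>k)\<close> turns \<open>Q\<close>, \<open>R\<close> and \<open>(Q + R)/2\<close> into \<open>-(I + E)\<close>, \<open>-I\<close>
  and \<open>-(I + E/2)\<close> for a symmetric matrix \<open>E\<close>. Hence \<open>\<rho>\<^sup>2 = \<Prod>\<^sub>i \<surd>(1 + \<mu>\<^sub>i) / (1 + \<mu>\<^sub>i/2)\<close> over the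
  eigenvalues \<open>\<mu>\<^sub>i\<close> of \<open>E\<close>, and each factor is at least \<open>exp (-\<mu>\<^sub>i\<^sup>2)\<close> as long as \<open>\<bar>\<mu>\<^sub>i\<bar> \<le> 1/2\<close>.
  The eigenvalues are bounded by the Frobenius norm of \<open>E\<close>. At an interior maximiser the
  optimality conditions read \<open>\<Sum>\<^sub>v p\<^sub>v \<phi>\<^sub>k(v) / y\<^sub>v = 1\<close> with \<open>y\<^sub>v = \<Sum>\<^sub>k \<theta>\<^sup>*\<^sub>k \<phi>\<^sub>k(v)\<close>; together with
  \<open>\<epsilon>\<close>-sparsity they bound every entry of \<open>E\<close> by \<open>O(\<epsilon>)\<close>, so that
  \<open>\<parallel>E\<parallel>\<^sup>2 \<le> \<epsilon>\<^sup>2 F(\<epsilon>) < 1/4\<close> and \<open>\<rho>\<^sup>2 \<ge> exp (- K F(\<epsilon>\<^sub>0) \<epsilon>\<^sup>2)\<close>.\<close>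

section \<open>Frobenius norm and congruence invariance of \<open>\<rho>\<^sup>2\<close>\<close>

lemma power2_norm_matrix:
  fixes E :: "real^'n^'m"
  shows "(norm E)\<^sup>2 = (\<Sum>i\<in>UNIV. \<Sum>j\<in>UNIV. (E$i$j)\<^sup>2)"
  unfolding power2_norm_eq_inner by (simp add: inner_vec_def power2_eq_square)

lemma det_scaleR_matrix:
  fixes A :: "real^'n^'n"
  shows "det (c *\<^sub>R A) = c ^ CARD('n) * det A"
proof -
  have "c *\<^sub>R A = (\<chi> i. c *s A$i)"
    by (simp add: vec_eq_iff)
  then show ?thesis
    using det_rows_mul[of "\<lambda>_. c" "\<lambda>i. A$i"] by simp
qed

definition diag_matrix :: "('n \<Rightarrow> 'a::zero) \<Rightarrow> 'a^'n^'n" where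
  "diag_matrix d = (\<chi> i j. if i = j then d i else 0)"

lemma diag_matrix_sandwich:
  fixes X :: "'a::comm_semiring_1^'n^'n"
  shows "(diag_matrix d ** X ** diag_matrix d) $ i $ j = d i * X$i$j * d j"
  by (simp add: diag_matrix_def matrix_matrix_mult_def if_distrib if_distribR cong: if_cong)

lemma det_diag_matrix: "det (diag_matrix d) = (\<Prod>i\<in>UNIV. d i)"
  unfolding diag_matrix_def by (subst det_diagonal) auto

lemma rho2_uminus: "rho2 (- Q) (- R) = rho2 Q R"
proof -
  have "\<bar>det (- A)\<bar> = \<bar>det A\<bar>" for A :: "real^'n^'n"
    using det_scaleR_matrix[of "-1" A] by (simp add: abs_mult)
  moreover have "(1/2) *\<^sub>R (- Q + - R) = - ((1/2) *\<^sub>R (Q + R))"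
    by (simp add: algebra_simps)
  ultimately show ?thesis
    unfolding rho2_def by metis
qed

lemma rho2_congruence:
  fixes D X Y :: "real^'n^'n"
  assumes "det D \<noteq> 0"
  shows "rho2 (D ** X ** D) (D ** Y ** D) = rho2 X Y"
proof -
  have sandwich: "\<bar>det (D ** A ** D)\<bar> = (det D)\<^sup>2 * \<bar>det A\<bar>" for A
    by (simp add: det_mul abs_mult power2_eq_square)
  have half: "(1/2) *\<^sub>R (D ** X ** D + D ** Y ** D) = D ** ((1/2) *\<^sub>R (X + Y)) ** D"
    by (simp add: vec_eq_iff matrix_matrix_mult_def sum.distrib sum_distrib_left algebra_simps)
  show ?thesis
    unfolding rho2_def half sandwich using assms
    by (cases "det ((1/2) *\<^sub>R (X + Y)) = 0") (simp_all add: real_sqrt_mult power2_eq_square field_simps)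
qed

lemma rho2_identity_plus:
  fixes E :: "real^'n^'n"
  shows "rho2 (mat 1 + E) (mat 1) = sqrt \<bar>det (mat 1 + E)\<bar> / \<bar>det (mat 1 + (1/2) *\<^sub>R E)\<bar>"
proof -
  have "(1/2) *\<^sub>R (mat 1 + E + mat 1) = mat 1 + (1/2) *\<^sub>R E"
    by (auto simp: vec_eq_iff mat_def)
  then show ?thesis
    unfolding rho2_def by simp
qed

lemma power2_norm_matrix_le:
  fixes E :: "real^'n^'n" and a b :: real
  assumes diag: "\<And>i. \<bar>E$i$i\<bar> \<le> a" and offdiag: "\<And>i j. i \<noteq> j \<Longrightarrow> \<bar>E$i$j\<bar> \<le> b"
  shows "(norm E)\<^sup>2 \<le> CARD('n) * a\<^sup>2 + CARD('n) * (real CARD('n) - 1) * b\<^sup>2"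
proof -
  have row: "(\<Sum>j\<in>UNIV. (E$i$j)\<^sup>2) \<le> a\<^sup>2 + (real CARD('n) - 1) * b\<^sup>2" for i
  proof -
    have "(\<Sum>j\<in>UNIV. (E$i$j)\<^sup>2) = (E$i$i)\<^sup>2 + (\<Sum>j\<in>UNIV - {i}. (E$i$j)\<^sup>2)"
      by (simp add: sum.remove)
    also have "\<dots> \<le> a\<^sup>2 + (\<Sum>j\<in>UNIV - {i}. b\<^sup>2)"
      using power_mono[OF diag abs_ge_zero, of i 2] power_mono[OF offdiag abs_ge_zero, of i _ 2]
      by (intro add_mono sum_mono) auto
    also have "\<dots> = a\<^sup>2 + (real CARD('n) - 1) * b\<^sup>2"
      by (simp add: card_Diff_singleton of_nat_diff Suc_le_eq)
    finally show ?thesis .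
  qed
  have "(norm E)\<^sup>2 \<le> (\<Sum>i\<in>(UNIV :: 'n set). a\<^sup>2 + (real CARD('n) - 1) * b\<^sup>2)"
    unfolding power2_norm_matrix by (intro sum_mono row)
  also have "\<dots> = CARD('n) * a\<^sup>2 + CARD('n) * (real CARD('n) - 1) * b\<^sup>2"
    by (simp add: algebra_simps)
  finally show ?thesis .
qed

text \<open>With \<open>D = diag (1 / \<surd>\<theta>\<^sub>k)\<close> one has \<open>Q = - D (I + E) D\<close> and \<open>R = - D D\<close>, where \<open>E\<close> is the
  following matrix.\<close>
definition scaled_defect :: "real^'k \<Rightarrow> real^'k^'k \<Rightarrow> real^'k^'k" where
  "scaled_defect th Q = (\<chi> i j. - (sqrt (th$i) * sqrt (th$j) * Q$i$j) - (if i = j then 1 else 0))"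

lemma rho2_Rmat_eq:
  fixes th :: "real^'k"
  assumes "\<forall>k. th$k > 0"
  shows "rho2 Q (Rmat th) = rho2 (mat 1 + scaled_defect th Q) (mat 1)"
proof -
  define D :: "real^'k^'k" where "D = diag_matrix (\<lambda>k. 1 / sqrt (th$k))"
  have sq: "sqrt (th$k) * sqrt (th$k) = th$k" and nz: "th$k \<noteq> 0" and abs: "\<bar>th$k\<bar> = th$k" for k
    using assms by (simp_all add: less_imp_le less_imp_neq[symmetric])
  have "Q = - (D ** (mat 1 + scaled_defect th Q) ** D)"
    by (simp add: vec_eq_iff D_def diag_matrix_sandwich scaled_defect_def mat_def nz)
  moreover have "Rmat th = - (D ** mat 1 ** D)"
    by (simp add: vec_eq_iff D_def diag_matrix_sandwich Rmat_def mat_def sq abs)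
  moreover have "det D \<noteq> 0"
    by (simp add: D_def det_diag_matrix nz)
  ultimately show ?thesis
    by (metis rho2_uminus rho2_congruence)
qed

section \<open>Determinants of symmetric perturbations of the identity\<close>

lemma matrix_form_le_norm:
  fixes E :: "real^'n^'n" and a :: "'n \<Rightarrow> real"
  shows "(\<Sum>i\<in>UNIV. \<Sum>j\<in>UNIV. \<bar>E$i$j\<bar> * (a i * a j)) \<le> norm E * (\<Sum>i\<in>UNIV. (a i)\<^sup>2)"
proof -
  define F :: "real^'n^'n" where "F = (\<chi> i j. \<bar>E$i$j\<bar>)"
  define G :: "real^'n^'n" where "G = (\<chi> i j. a i * a j)"
  have "norm F = norm E"
    using power2_norm_matrix[of F] power2_norm_matrix[of E]
    by (simp add: F_def) (metis norm_ge_zero power2_eq_iff_nonneg)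
  moreover have "(norm G)\<^sup>2 = (\<Sum>i\<in>UNIV. (a i)\<^sup>2)\<^sup>2"
    unfolding power2_norm_matrix G_def
    by (simp add: power2_eq_square sum_product mult_ac)
  then have "norm G = (\<Sum>i\<in>UNIV. (a i)\<^sup>2)"
    by (simp add: sum_nonneg)
  moreover have "(\<Sum>i\<in>UNIV. \<Sum>j\<in>UNIV. \<bar>E$i$j\<bar> * (a i * a j)) = inner F G"
    by (simp add: F_def G_def inner_vec_def)
  ultimately show ?thesis
    using norm_cauchy_schwarz[of F G] by simp
qed

lemma cnj_symmetric_form:
  fixes E :: "real^'n^'n" and x :: "'n \<Rightarrow> complex"
  assumes "transpose E = E"
  shows "cnj (\<Sum>i\<in>UNIV. cnj (x i) * (\<Sum>j\<in>UNIV. of_real (E$i$j) * x j))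
       = (\<Sum>i\<in>UNIV. cnj (x i) * (\<Sum>j\<in>UNIV. of_real (E$i$j) * x j))"
proof -
  have sym: "E$j$i = E$i$j" for i j
    using assms by (metis transpose_def vec_lambda_beta)
  have "cnj (\<Sum>i\<in>UNIV. cnj (x i) * (\<Sum>j\<in>UNIV. of_real (E$i$j) * x j))
      = (\<Sum>i\<in>UNIV. \<Sum>j\<in>UNIV. of_real (E$i$j) * (x i * cnj (x j)))"
    by (simp add: sum_distrib_left mult_ac)
  also have "\<dots> = (\<Sum>j\<in>UNIV. \<Sum>i\<in>UNIV. of_real (E$i$j) * (x i * cnj (x j)))"
    by (rule sum.swap)
  finally show ?thesis
    by (simp add: sum_distrib_left mult_ac sym)
qed

lemma cmod_form_le_norm:
  fixes E :: "real^'n^'n" and x :: "'n \<Rightarrow> complex"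
  shows "cmod (\<Sum>i\<in>UNIV. cnj (x i) * (\<Sum>j\<in>UNIV. of_real (E$i$j) * x j))
       \<le> norm E * (\<Sum>i\<in>UNIV. (cmod (x i))\<^sup>2)"
proof -
  have "cmod (\<Sum>i\<in>UNIV. cnj (x i) * (\<Sum>j\<in>UNIV. of_real (E$i$j) * x j))
      \<le> (\<Sum>i\<in>UNIV. cmod (x i) * (\<Sum>j\<in>UNIV. \<bar>E$i$j\<bar> * cmod (x j)))"
  proof (rule order_trans[OF norm_sum sum_mono])
    fix i
    have "cmod (\<Sum>j\<in>UNIV. of_real (E$i$j) * x j) \<le> (\<Sum>j\<in>UNIV. \<bar>E$i$j\<bar> * cmod (x j))"
      using norm_sum[of "\<lambda>j. of_real (E$i$j) * x j" UNIV] by (simp add: norm_mult)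
    then show "cmod (cnj (x i) * (\<Sum>j\<in>UNIV. of_real (E$i$j) * x j))
        \<le> cmod (x i) * (\<Sum>j\<in>UNIV. \<bar>E$i$j\<bar> * cmod (x j))"
      by (simp add: norm_mult mult_left_mono)
  qed
  also have "\<dots> = (\<Sum>i\<in>UNIV. \<Sum>j\<in>UNIV. \<bar>E$i$j\<bar> * (cmod (x i) * cmod (x j)))"
    by (simp add: sum_distrib_left mult_ac)
  also have "\<dots> \<le> norm E * (\<Sum>i\<in>UNIV. (cmod (x i))\<^sup>2)"
    by (rule matrix_form_le_norm)
  finally show ?thesis .
qed

text \<open>A null vector \<open>x\<close> of \<open>I + z E\<close> gives \<open>\<parallel>x\<parallel>\<^sup>2 + z \<langle>x, E x\<rangle> = 0\<close>, and the Rayleigh quotient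
  \<open>\<langle>x, E x\<rangle> / \<parallel>x\<parallel>\<^sup>2\<close> of a real symmetric matrix is real and bounded by its Frobenius norm.\<close>
lemma singular_symmetric_pencil:
  fixes E :: "real^'n^'n" and z :: complex
  assumes sym: "transpose E = E"
    and sing: "det (mat 1 + (\<chi> i j. z * of_real (E$i$j))) = 0"
  obtains \<mu> where "z * of_real \<mu> = -1" "\<bar>\<mu>\<bar> \<le> norm E"
proof -
  let ?M = "(\<chi> i j. z * of_real (E$i$j)) :: complex^'n^'n"
  have "\<not> (\<exists>B. B ** (mat 1 + ?M) = mat 1)"
    using sing invertible_det_nz invertible_left_inverse by blast
  then obtain x where null: "(mat 1 + ?M) *v x = 0" and "x \<noteq> 0"
    using matrix_left_invertible_ker by blast
  then obtain i0 where "x$i0 \<noteq> 0"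
    by (metis vec_eq_iff zero_index)
  define S where "S = (\<Sum>i\<in>UNIV. (cmod (x$i))\<^sup>2)"
  define q where "q = (\<Sum>i\<in>UNIV. cnj (x$i) * (\<Sum>j\<in>UNIV. of_real (E$i$j) * x$j))"
  have "0 < (cmod (x$i0))\<^sup>2"
    using \<open>x$i0 \<noteq> 0\<close> by simp
  also have "\<dots> \<le> S"
    unfolding S_def by (rule member_le_sum) auto
  finally have "S > 0" .
  have "x + ?M *v x = 0"
    using null by (simp add: matrix_vector_mult_add_rdistrib)
  then have row: "x$i + z * (\<Sum>j\<in>UNIV. of_real (E$i$j) * x$j) = 0" for i
    by (simp add: vec_eq_iff matrix_vector_mult_def sum_distrib_left mult_ac)
  have "of_real S = (\<Sum>i\<in>UNIV. cnj (x$i) * x$i)"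
    unfolding S_def of_real_sum complex_norm_square by (simp add: mult.commute)
  then have "of_real S + z * q = (\<Sum>i\<in>UNIV. cnj (x$i) * (x$i + z * (\<Sum>j\<in>UNIV. of_real (E$i$j) * x$j)))"
    by (simp add: q_def sum.distrib sum_distrib_left distrib_left mult.left_commute)
  then have Sq: "of_real S + z * q = 0"
    by (simp add: row)
  have "q = of_real (Re q)"
    using cnj_symmetric_form[OF sym, of "\<lambda>i. x$i"] by (metis q_def Reals_cnj_iff of_real_Re)
  with Sq have "z * of_real (Re q / S) = -1"
    using \<open>S > 0\<close> by (simp add: field_simps) (metis add_eq_0_iff)
  moreover have "\<bar>Re q / S\<bar> \<le> norm E"
    using abs_Re_le_cmod[of q] cmod_form_le_norm[of "\<lambda>i. x$i" E] \<open>S > 0\<close>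
    by (simp add: S_def q_def divide_le_eq)
  ultimately show ?thesis
    using that by blast
qed

lemma poly_det:
  fixes A :: "'a::comm_ring_1 poly^'n^'n"
  shows "poly (det A) x = det (\<chi> i j. poly (A$i$j) x)"
  unfolding det_def by (simp add: poly_sum poly_prod)

lemma degree_det_le:
  fixes A :: "'a::comm_ring_1 poly^'n^'n"
  assumes "\<And>i j. degree (A$i$j) \<le> 1"
  shows "degree (det A) \<le> CARD('n)"
  unfolding det_def
proof (rule degree_sum_le)
  fix p :: "'n \<Rightarrow> 'n"
  have "degree (\<Prod>i\<in>UNIV. A$i$p i) \<le> (\<Sum>i\<in>UNIV. degree (A$i$p i))"
    using degree_prod_sum_le[of UNIV "\<lambda>i. A$i$p i"] by (simp add: o_def)
  also have "\<dots> \<le> CARD('n)"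
    using sum_mono[of UNIV "\<lambda>i. degree (A$i$p i)" "\<lambda>_. 1"] assms by simp
  finally have "degree (\<Prod>i\<in>UNIV. A$i$p i) \<le> CARD('n)" .
  then show "degree (of_int (sign p) * (\<Prod>i\<in>UNIV. A$i$p i)) \<le> CARD('n)"
    using degree_mult_le[of "of_int (sign p)" "\<Prod>i\<in>UNIV. A$i$p i"] by simp
qed simp

lemma det_of_real_matrix:
  fixes A :: "real^'n^'n"
  shows "det (\<chi> i j. of_real (A$i$j) :: 'a::{real_algebra_1, comm_ring_1}^'n^'n) = of_real (det A)"
  unfolding det_def by simp

lemma poly_eq_prod_one_minus_div_roots:
  fixes P :: "complex poly"
  assumes P0: "poly P 0 = 1"
  obtains r where "\<And>i. i < degree P \<Longrightarrow> poly P (r i) = 0"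
    "\<And>w. poly P w = (\<Prod>i<degree P. 1 - w / r i)"
proof -
  obtain r where decomp: "smult (lead_coeff P) (\<Prod>i<degree P. [:- r i, 1:]) = P"
    using complex_poly_decompose' by blast
  have P: "poly P w = lead_coeff P * (\<Prod>i<degree P. w - r i)" for w
    by (subst decomp[symmetric]) (simp add: poly_prod)
  have root: "poly P (r i) = 0" if "i < degree P" for i
    unfolding P using that by (auto intro: prod_zero)
  then have nonzero: "r i \<noteq> 0" if "i < degree P" for i
    using that P0 by force
  have lead: "lead_coeff P * (\<Prod>i<degree P. - r i) = 1"
    using P[of 0] P0 by simp
  then have "(\<Prod>i<degree P. - r i) \<noteq> 0"
    by (metis mult_zero_right zero_neq_one)
  with lead have lead_inverse: "lead_coeff P = 1 / (\<Prod>i<degree P. - r i)"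
    by (simp add: eq_divide_eq)
  have "poly P w = (\<Prod>i<degree P. 1 - w / r i)" for w
  proof -
    have "(\<Prod>i<degree P. 1 - w / r i) = (\<Prod>i<degree P. (w - r i) / (- r i))"
      by (rule prod.cong) (use nonzero in \<open>auto simp: field_simps\<close>)
    also have "\<dots> = (\<Prod>i<degree P. w - r i) / (\<Prod>i<degree P. - r i)"
      by (rule prod_dividef)
    also have "\<dots> = poly P w"
      unfolding P lead_inverse by simp
    finally show ?thesis ..
  qed
  with root show ?thesis
    using that by blast
qed

lemma det_pencil_poly:
  fixes E :: "real^'n^'n"
  obtains P :: "complex poly" where "degree P \<le> CARD('n)" "poly P 0 = 1"
    "\<And>z. poly P z = det (mat 1 + (\<chi> i j. z * of_real (E$i$j)))"
proof -
  define P where "P = det (mat 1 + (\<chi> i j. [:0, complex_of_real (E$i$j):]))"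
  have poly_P: "poly P z = det (mat 1 + (\<chi> i j. z * of_real (E$i$j)))" for z
    unfolding P_def poly_det by (rule arg_cong[where f = det]) (auto simp: vec_eq_iff mat_def)
  have "degree P \<le> CARD('n)"
    unfolding P_def by (rule degree_det_le) (simp add: mat_def degree_add_le)
  moreover have "(\<chi> i j. 0 * complex_of_real (E$i$j)) = (0 :: complex^'n^'n)"
    by (simp add: vec_eq_iff)
  then have "poly P 0 = 1"
    by (simp add: poly_P)
  ultimately show ?thesis
    using that poly_P by blast
qed

text \<open>The \<open>\<mu>\<^sub>i\<close> are the eigenvalues of \<open>E\<close>, found as \<open>-1/z\<close> for the roots \<open>z\<close> of \<open>det (I + z E)\<close>;
  this avoids the spectral theorem.\<close>
lemma det_symmetric_pencil_eq_prod:
  fixes E :: "real^'n^'n"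
  assumes sym: "transpose E = E"
  obtains n \<mu> where "n \<le> CARD('n)" "\<And>i. i < n \<Longrightarrow> \<bar>\<mu> i\<bar> \<le> norm E"
    "\<And>t. det (mat 1 + t *\<^sub>R E) = (\<Prod>i<n. 1 + t * \<mu> i)"
proof -
  obtain P :: "complex poly" where deg: "degree P \<le> CARD('n)" and "poly P 0 = 1"
    and poly_P: "\<And>z. poly P z = det (mat 1 + (\<chi> i j. z * of_real (E$i$j)))"
    using det_pencil_poly[of E] by blast
  obtain r where root: "\<And>i. i < degree P \<Longrightarrow> poly P (r i) = 0"
    and factor: "\<And>w. poly P w = (\<Prod>i<degree P. 1 - w / r i)"
    using poly_eq_prod_one_minus_div_roots[OF \<open>poly P 0 = 1\<close>] by blast
  have "\<exists>\<mu>. r i * of_real \<mu> = -1 \<and> \<bar>\<mu>\<bar> \<le> norm E" if "i < degree P" for i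
  proof -
    have "det (mat 1 + (\<chi> i' j. r i * of_real (E$i'$j))) = 0"
      using root[OF that] by (simp add: poly_P)
    then obtain \<mu> where "r i * of_real \<mu> = -1" "\<bar>\<mu>\<bar> \<le> norm E"
      by (rule singular_symmetric_pencil[OF sym])
    then show ?thesis
      by blast
  qed
  then obtain \<mu> where \<mu>: "\<And>i. i < degree P \<Longrightarrow> r i * of_real (\<mu> i) = -1 \<and> \<bar>\<mu> i\<bar> \<le> norm E"
    by metis
  have det_eq: "det (mat 1 + t *\<^sub>R E) = (\<Prod>i<degree P. 1 + t * \<mu> i)" for t
  proof -
    have "of_real (det (mat 1 + t *\<^sub>R E)) = det (\<chi> i j. of_real ((mat 1 + t *\<^sub>R E)$i$j) :: complex^'n^'n)"
      by (rule det_of_real_matrix[symmetric])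
    also have "\<dots> = poly P (of_real t)"
      unfolding poly_P by (rule arg_cong[where f = det]) (simp add: vec_eq_iff mat_def)
    also have "\<dots> = of_real (\<Prod>i<degree P. 1 + t * \<mu> i)"
      unfolding factor of_real_prod
    proof (rule prod.cong)
      fix i assume "i \<in> {..<degree P}"
      then have "r i * of_real (\<mu> i) = -1"
        using \<mu> by blast
      moreover from this have "r i \<noteq> 0"
        by auto
      ultimately have "of_real (\<mu> i) = - 1 / r i"
        by (simp add: field_simps)
      then show "1 - of_real t / r i = of_real (1 + t * \<mu> i)"
        by simp
    qed simp
    finally show ?thesis
      using of_real_eq_iff by blast
  qed
  show ?thesis
    by (rule that[OF deg _ det_eq]) (use \<mu> in blast)
qed

lemma exp_neg_two_mult_le_one_minus:
  fixes x :: real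
  assumes "0 \<le> x" "x \<le> 1/2"
  shows "exp (- 2 * x) \<le> 1 - x"
proof -
  have "exp (- 2 * x) = 1 / exp (2 * x)"
    by (simp add: exp_minus inverse_eq_divide)
  also have "\<dots> \<le> 1 / (1 + 2 * x)"
    using exp_ge_add_one_self[of "2 * x"] assms by (intro divide_left_mono) auto
  also have "\<dots> \<le> 1 - x"
  proof -
    have "0 \<le> x * (1 - 2 * x)"
      using assms by simp
    then have "1 \<le> (1 - x) * (1 + 2 * x)"
      by (simp add: algebra_simps)
    then show ?thesis
      using assms by (simp add: divide_le_eq)
  qed
  finally show ?thesis .
qed

lemma power2_sqrt_div_eq:
  fixes m :: real
  assumes "\<bar>m\<bar> \<le> 1/2"
  shows "(sqrt (1 + m) / (1 + m / 2))\<^sup>2 = 1 - m\<^sup>2 / (2 + m)\<^sup>2"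
proof -
  have "(2 + m)\<^sup>2 = 4 * (1 + m / 2)\<^sup>2"
    by (simp add: power2_eq_square algebra_simps)
  then have rescaled: "4 * (1 + m) / (2 + m)\<^sup>2 = (1 + m) / (1 + m / 2)\<^sup>2"
    by (simp only: mult_divide_mult_cancel_left_if) simp
  have "(2 + m)\<^sup>2 - m\<^sup>2 = 4 * (1 + m)"
    by (simp add: power2_eq_square algebra_simps)
  moreover have "(2 + m)\<^sup>2 \<noteq> 0"
    using assms by (simp add: abs_le_iff)
  ultimately have "1 - m\<^sup>2 / (2 + m)\<^sup>2 = 4 * (1 + m) / (2 + m)\<^sup>2"
    by (metis diff_divide_distrib divide_self)
  then show ?thesis
    unfolding rescaled using assms by (simp add: power_divide abs_le_iff)
qed

lemma exp_neg_square_le_sqrt_div: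
  fixes m :: real
  assumes "\<bar>m\<bar> \<le> 1/2"
  shows "exp (- m\<^sup>2) \<le> sqrt (1 + m) / (1 + m / 2)"
proof -
  define x where "x = m\<^sup>2 / (2 + m)\<^sup>2"
  have "1 \<le> (2 + m)\<^sup>2"
    using power_mono[of 1 "2 + m" 2] assms by (auto simp: abs_le_iff)
  then have "x \<le> m\<^sup>2"
    unfolding x_def by (simp add: divide_le_eq mult_le_cancel_left1)
  moreover have "m\<^sup>2 \<le> 1/4"
    using power_mono[OF assms, of 2] by (simp add: power2_eq_square)
  ultimately have x: "0 \<le> x" "x \<le> 1/2"
    unfolding x_def by auto
  have "(exp (- m\<^sup>2))\<^sup>2 = exp (- 2 * m\<^sup>2)"
    by (simp flip: exp_of_nat_mult)
  also have "\<dots> \<le> exp (- 2 * x)"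
    using \<open>x \<le> m\<^sup>2\<close> by simp
  also have "\<dots> \<le> 1 - x"
    using exp_neg_two_mult_le_one_minus[OF x] .
  also have "\<dots> = (sqrt (1 + m) / (1 + m / 2))\<^sup>2"
    unfolding x_def using power2_sqrt_div_eq[OF assms] by simp
  finally have "(exp (- m\<^sup>2))\<^sup>2 \<le> (sqrt (1 + m) / (1 + m / 2))\<^sup>2" .
  moreover have "0 \<le> sqrt (1 + m) / (1 + m / 2)"
    using assms by (auto simp: abs_le_iff)
  ultimately show ?thesis
    by (rule power2_le_imp_le)
qed

lemma real_sqrt_prod: "sqrt (prod f A) = (\<Prod>i\<in>A. sqrt (f i))"
  by (induction A rule: infinite_finite_induct) (simp_all add: real_sqrt_mult)

lemma exp_le_sqrt_prod_div_prod:
  fixes \<mu> :: "nat \<Rightarrow> real"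
  assumes "\<And>i. i < n \<Longrightarrow> \<bar>\<mu> i\<bar> \<le> c" "c \<le> 1/2"
  shows "exp (- (n * c\<^sup>2)) \<le> sqrt (\<Prod>i<n. 1 + \<mu> i) / (\<Prod>i<n. 1 + \<mu> i / 2)"
proof -
  have "(\<Sum>i<n. (\<mu> i)\<^sup>2) \<le> (\<Sum>i<n. c\<^sup>2)"
  proof (rule sum_mono)
    fix i assume "i \<in> {..<n}"
    then have "\<bar>\<mu> i\<bar> \<le> \<bar>c\<bar>"
      using assms(1)[of i] abs_ge_self[of c] by simp
    then show "(\<mu> i)\<^sup>2 \<le> c\<^sup>2"
      by (simp add: abs_le_square_iff)
  qed
  then have "exp (- (n * c\<^sup>2)) \<le> (\<Prod>i<n. exp (- (\<mu> i)\<^sup>2))"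
    by (simp add: exp_sum[symmetric] sum_negf)
  also have "\<dots> \<le> (\<Prod>i<n. sqrt (1 + \<mu> i) / (1 + \<mu> i / 2))"
  proof (rule prod_mono)
    fix i assume "i \<in> {..<n}"
    then have "\<bar>\<mu> i\<bar> \<le> 1/2"
      using assms(1)[of i] assms(2) by simp
    then show "0 \<le> exp (- (\<mu> i)\<^sup>2) \<and> exp (- (\<mu> i)\<^sup>2) \<le> sqrt (1 + \<mu> i) / (1 + \<mu> i / 2)"
      by (simp add: exp_neg_square_le_sqrt_div)
  qed
  finally show ?thesis
    by (simp add: prod_dividef real_sqrt_prod)
qed

lemma rho2_symmetric_perturbation_ge:
  fixes E :: "real^'n^'n"
  assumes "transpose E = E" "norm E \<le> 1/2"
  shows "exp (- (CARD('n) * (norm E)\<^sup>2)) \<le> rho2 (mat 1 + E) (mat 1)"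
proof -
  obtain n \<mu> where n: "n \<le> CARD('n)" and \<mu>: "\<And>i. i < n \<Longrightarrow> \<bar>\<mu> i\<bar> \<le> norm E"
    and det: "\<And>t. det (mat 1 + t *\<^sub>R E) = (\<Prod>i<n. 1 + t * \<mu> i)"
    using det_symmetric_pencil_eq_prod[OF assms(1)] by blast
  have "0 < 1 + \<mu> i" "0 < 1 + \<mu> i / 2" if "i < n" for i
    using \<mu>[OF that] assms(2) by (auto simp: abs_le_iff)
  then have pos: "0 < (\<Prod>i<n. 1 + \<mu> i)" "0 < (\<Prod>i<n. 1 + \<mu> i / 2)"
    by (auto intro!: prod_pos)
  have "rho2 (mat 1 + E) (mat 1) = sqrt (\<Prod>i<n. 1 + \<mu> i) / (\<Prod>i<n. 1 + \<mu> i / 2)"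
    unfolding rho2_identity_plus using det[of 1] det[of "1/2"] pos by simp
  moreover have "exp (- (CARD('n) * (norm E)\<^sup>2)) \<le> exp (- (n * (norm E)\<^sup>2))"
    using n by (simp add: mult_right_mono)
  moreover have "exp (- (n * (norm E)\<^sup>2)) \<le> sqrt (\<Prod>i<n. 1 + \<mu> i) / (\<Prod>i<n. 1 + \<mu> i / 2)"
    by (rule exp_le_sqrt_prod_div_prod) (use \<mu> assms(2) in auto)
  ultimately show ?thesis
    by linarith
qed

section \<open>The constants \<open>C\<^sub>1\<close>, \<open>C\<^sub>2\<close>, \<open>F\<close> and \<open>\<epsilon>\<^sub>0\<close>\<close>

lemma Min_range_vec_le: "Min (range (($) th)) \<le> th $ k"
  by (rule Min_le) auto

lemma Max_range_vec_ge: "th $ k \<le> Max (range (($) th))"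
  by (rule Max_ge) auto

lemma Min_range_vec_pos:
  fixes th :: "real^'k"
  assumes "\<forall>k. th $ k > 0"
  shows "Min (range (($) th)) > 0"
  using Min_in[of "range (($) th)"] assms by auto

lemma C1max_pos:
  fixes th :: "real^'k"
  assumes "\<forall>k. th $ k > 0"
  shows "C1max th > 0"
proof -
  have "0 < Max (range (($) th))"
    using Max_range_vec_ge[of th undefined] assms less_le_trans by blast
  moreover have "0 < Min (range (($) th)) powr (3/2)"
    using Min_range_vec_pos[OF assms] by (metis powr_gt_zero less_irrefl)
  ultimately show ?thesis
    unfolding C1max_def by (simp add: divide_pos_pos)
qed

lemma C2max_ge_inverse_Min:
  fixes th :: "real^'k"
  assumes "\<forall>k. th $ k > 0"
  shows "1 / Min (range (($) th)) \<le> C2max th"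
proof -
  let ?m = "Min (range (($) th))"
  have "?m > 0"
    by (rule Min_range_vec_pos[OF assms])
  then have "1 / ?m = ?m / ?m\<^sup>2"
    by (simp add: power2_eq_square)
  also have "\<dots> \<le> Max (range (($) th)) / ?m\<^sup>2"
    using Min_range_vec_le[of th] Max_range_vec_ge[of th] order_trans
    by (intro divide_right_mono) auto
  finally show ?thesis
    by (simp add: C2max_def)
qed

lemma C2max_pos:
  fixes th :: "real^'k"
  assumes "\<forall>k. th $ k > 0"
  shows "C2max th > 0"
proof -
  have "0 < 1 / Min (range (($) th))"
    using Min_range_vec_pos[OF assms] by simp
  then show ?thesis
    using C2max_ge_inverse_Min[OF assms] by linarith
qed

lemma C1max_ge:
  fixes th :: "real^'k"
  assumes pos: "\<forall>k. th $ k > 0"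
  shows "sqrt (th$a) * sqrt (th$b) / (th$a)\<^sup>2 \<le> C1max th"
proof -
  let ?m = "Min (range (($) th))"
  have "th$a powr (3/2) = th$a powr (1 + 1/2)"
    by simp
  also have "\<dots> = th$a powr 1 * th$a powr (1/2)"
    by (rule powr_add)
  also have "\<dots> = th$a * sqrt (th$a)"
    using pos[rule_format, of a] by (simp add: powr_half_sqrt)
  finally have "th$a powr (3/2) = th$a * sqrt (th$a)" .
  then have "sqrt (th$a) * sqrt (th$b) / (th$a)\<^sup>2 = sqrt (th$b) / th$a powr (3/2)"
    using pos[rule_format, of a] by (simp add: power2_eq_square field_simps)
  also have "\<dots> \<le> sqrt (Max (range (($) th))) / ?m powr (3/2)"
  proof (rule frac_le)
    have m: "0 < ?m"
      by (rule Min_range_vec_pos[OF pos])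
    have M: "th$b \<le> Max (range (($) th))"
      by (rule Max_range_vec_ge)
    then show "0 \<le> sqrt (Max (range (($) th)))"
      using pos[rule_format, of b] by (intro real_sqrt_ge_zero) linarith
    show "sqrt (th$b) \<le> sqrt (Max (range (($) th)))"
      using M by (rule real_sqrt_le_mono)
    show "0 < ?m powr (3/2)"
      using m by (metis powr_gt_zero less_irrefl)
    show "?m powr (3/2) \<le> th$a powr (3/2)"
      by (rule powr_mono2[OF _ less_imp_le[OF m] Min_range_vec_le]) simp
  qed
  finally show ?thesis
    by (simp add: C1max_def)
qed

lemma Ffun_ge:
  fixes th :: "real^'k"
  shows "4 * (C2max th)\<^sup>2 * CARD('k) \<le> Ffun th e"
proof -
  have "0 \<le> real CARD('k) - 1"
    by (simp add: Suc_le_eq)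
  then show ?thesis
    unfolding Ffun_def by simp
qed

lemma Ffun_pos:
  fixes th :: "real^'k"
  assumes "\<forall>k. th $ k > 0"
  shows "Ffun th e > 0"
proof -
  have "0 < 4 * (C2max th)\<^sup>2 * CARD('k)"
    using C2max_pos[OF assms] by simp
  then show ?thesis
    using Ffun_ge[of th e] by linarith
qed

lemma Ffun_mono:
  fixes th :: "real^'k"
  assumes "\<forall>k. th $ k > 0" "0 \<le> a" "a \<le> b"
  shows "Ffun th a \<le> Ffun th b"
proof -
  have "(2 * C1max th + C2max th * a)\<^sup>2 \<le> (2 * C1max th + C2max th * b)\<^sup>2"
    using C1max_pos[OF assms(1)] C2max_pos[OF assms(1)] assms(2,3)
    by (intro power_mono add_left_mono mult_left_mono) auto
  moreover have "0 \<le> real CARD('k) * (real CARD('k) - 1)"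
    using card_ge_0_finite[of "UNIV :: 'k set"] by simp
  ultimately show ?thesis
    unfolding Ffun_def by (simp add: mult_left_mono)
qed

lemma mult_sqrt_Ffun_strict_mono:
  fixes th :: "real^'k"
  assumes "\<forall>k. th $ k > 0" "0 \<le> a" "a < b"
  shows "a * sqrt (Ffun th a) < b * sqrt (Ffun th b)"
proof -
  have "a * sqrt (Ffun th a) < b * sqrt (Ffun th a)"
    using Ffun_pos[OF assms(1)] assms(3) by simp
  also have "\<dots> \<le> b * sqrt (Ffun th b)"
    using Ffun_mono[OF assms(1,2)] assms by (intro mult_left_mono) auto
  finally show ?thesis .
qed

lemma eps0_root:
  fixes th :: "real^'k"
  assumes pos: "\<forall>k. th $ k > 0"
  shows "eps0 th > 0" "eps0 th * sqrt (Ffun th (eps0 th)) = 1/2"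
proof -
  let ?g = "\<lambda>e. e * sqrt (Ffun th e)"
  define b where "b = 1 / C2max th"
  have "b > 0"
    using C2max_pos[OF pos] by (simp add: b_def)
  have "4 * (C2max th)\<^sup>2 * 1 \<le> 4 * (C2max th)\<^sup>2 * CARD('k)"
    by (intro mult_left_mono) (simp_all add: Suc_le_eq)
  then have "4 * (C2max th)\<^sup>2 \<le> Ffun th b"
    using Ffun_ge[of th b] by linarith
  then have "2 * C2max th \<le> sqrt (Ffun th b)"
    by (intro real_le_rsqrt) (simp add: power_mult_distrib)
  then have "1/2 \<le> ?g b"
    using C2max_pos[OF pos] by (simp add: b_def field_simps)
  moreover have "\<forall>x. 0 \<le> x \<and> x \<le> b \<longrightarrow> isCont ?g x"
    unfolding Ffun_def by (auto intro!: continuous_intros)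
  ultimately obtain e where e: "0 \<le> e" "e \<le> b" "?g e = 1/2"
    using IVT[of ?g 0 "1/2" b] \<open>b > 0\<close> by auto
  then have "e > 0"
    by (cases "e = 0") auto
  have "\<exists>!e. e > 0 \<and> ?g e = 1/2"
  proof (rule ex1I[of _ e])
    show "e > 0 \<and> ?g e = 1/2"
      using \<open>e > 0\<close> e by simp
  next
    fix y assume "y > 0 \<and> ?g y = 1/2"
    then show "y = e"
      using mult_sqrt_Ffun_strict_mono[OF pos, of y e] mult_sqrt_Ffun_strict_mono[OF pos, of e y]
        \<open>e > 0\<close> e by (cases y e rule: linorder_cases) auto
  qed
  then show "eps0 th > 0" "?g (eps0 th) = 1/2"
    unfolding eps0_def using theI'[of "\<lambda>e. e > 0 \<and> ?g e = 1/2"] by auto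
qed

lemma mult_sqrt_Ffun_lt_half:
  fixes th :: "real^'k"
  assumes "\<forall>k. th $ k > 0" "0 \<le> e" "e < eps0 th"
  shows "e * sqrt (Ffun th e) < 1/2"
  using mult_sqrt_Ffun_strict_mono[OF assms] eps0_root[OF assms(1)] by simp

section \<open>The objective \<open>H\<close>\<close>

lemma sum_axis_shift:
  fixes th :: "real^'k"
  shows "(\<Sum>k\<in>UNIV. (th + s *\<^sub>R axis i 1 + t *\<^sub>R axis j 1) $ k * w k)
     = (\<Sum>k\<in>UNIV. th$k * w k) + s * w i + t * w j"
proof -
  have "(\<Sum>k\<in>UNIV. (th + s *\<^sub>R axis i 1 + t *\<^sub>R axis j 1) $ k * w k)
     = (\<Sum>k\<in>UNIV. th$k * w k + (if k = i then s * w k else 0) + (if k = j then t * w k else 0))"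
    by (rule sum.cong) (auto simp: axis_def algebra_simps)
  then show ?thesis
    by (simp add: sum.distrib)
qed

lemma has_real_derivative_sum_ln_affine:
  fixes a b p :: "nat \<Rightarrow> real"
  assumes "\<forall>v<V. a v > 0"
  shows "((\<lambda>t. \<Sum>v<V. p v * ln (a v + t * b v)) has_real_derivative (\<Sum>v<V. p v * (b v / a v))) (at 0)"
  using assms by (intro DERIV_sum DERIV_cmult) (auto intro!: derivative_eq_intros)

lemma eventually_affine_pos:
  fixes a b :: "nat \<Rightarrow> real"
  assumes "\<forall>v<V. a v > 0"
  shows "\<forall>\<^sub>F s in nhds 0. \<forall>v\<in>{..<V}. a v + s * b v > 0"
proof (rule eventually_ball_finite)
  show "\<forall>v\<in>{..<V}. \<forall>\<^sub>F s in nhds 0. a v + s * b v > 0"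
  proof
    fix v assume "v \<in> {..<V}"
    moreover have "((\<lambda>s. a v + s * b v) \<longlongrightarrow> a v + 0 * b v) (nhds 0)"
      by (intro tendsto_intros filterlim_ident)
    ultimately show "\<forall>\<^sub>F s in nhds 0. a v + s * b v > 0"
      using assms by (simp add: order_tendstoD(1))
  qed
qed simp

lemma hessian_Hobj:
  fixes th :: "real^'k"
  assumes y: "\<forall>v<V. (\<Sum>k\<in>UNIV. th$k * phi k v) > 0"
  shows "hessian (Hobj V p phi) th $ i $ j
    = - (\<Sum>v<V. p v * (phi i v * phi j v / (\<Sum>k\<in>UNIV. th$k * phi k v)\<^sup>2))"
proof -
  define y where "y v = (\<Sum>k\<in>UNIV. th$k * phi k v)" for v
  have H: "Hobj V p phi (th + s *\<^sub>R axis i 1 + t *\<^sub>R axis j 1)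
      = (\<Sum>v<V. p v * ln ((y v + s * phi i v) + t * phi j v))" for s t
    unfolding Hobj_def y_def sum_axis_shift by (simp add: add.assoc)
  have "\<forall>\<^sub>F s in nhds 0. \<forall>v\<in>{..<V}. y v + s * phi i v > 0"
    using y by (intro eventually_affine_pos) (simp add: y_def)
  moreover have "deriv (\<lambda>t. Hobj V p phi (th + s *\<^sub>R axis i 1 + t *\<^sub>R axis j 1)) 0
      = (\<Sum>v<V. p v * (phi j v / (y v + s * phi i v)))"
    if "\<forall>v\<in>{..<V}. y v + s * phi i v > 0" for s
    unfolding H by (rule DERIV_imp_deriv, rule has_real_derivative_sum_ln_affine) (use that in auto)
  ultimately have "\<forall>\<^sub>F s in nhds 0. deriv (\<lambda>t. Hobj V p phi (th + s *\<^sub>R axis i 1 + t *\<^sub>R axis j 1)) 0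
      = (\<Sum>v<V. p v * (phi j v / (y v + s * phi i v)))"
    by (rule eventually_mono)
  then have "hessian (Hobj V p phi) th $ i $ j = deriv (\<lambda>s. \<Sum>v<V. p v * (phi j v / (y v + s * phi i v))) 0"
    unfolding hessian_def by (simp add: deriv_cong_ev)
  also have "\<dots> = (\<Sum>v<V. p v * (- (phi j v * phi i v / (y v)\<^sup>2)))"
  proof (intro DERIV_imp_deriv DERIV_sum DERIV_cmult)
    fix v assume "v \<in> {..<V}"
    then have "y v > 0"
      using y by (simp add: y_def)
    then show "((\<lambda>s. phi j v / (y v + s * phi i v)) has_real_derivative - (phi j v * phi i v / (y v)\<^sup>2)) (at 0)"
      by (auto intro!: derivative_eq_intros simp: power2_eq_square)
  qed
  finally show ?thesis
    by (simp add: y_def sum_negf mult.commute)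
qed

lemma simplexK_exchange:
  fixes th :: "real^'k"
  assumes "th \<in> simplexK" "i \<noteq> j" "\<bar>t\<bar> \<le> th $ i" "\<bar>t\<bar> \<le> th $ j"
  shows "th + t *\<^sub>R axis i 1 + (- t) *\<^sub>R axis j 1 \<in> simplexK"
proof -
  have comp: "(th + t *\<^sub>R axis i 1 + (- t) *\<^sub>R axis j 1) $ k
      = th$k + (if k = i then t else 0) + (if k = j then - t else 0)" for k
    by (auto simp: axis_def)
  have "0 \<le> th$k + (if k = i then t else 0) + (if k = j then - t else 0)" for k
    using assms by (auto simp: simplexK_def abs_le_iff)
  moreover have "(\<Sum>k\<in>UNIV. th$k + (if k = i then t else 0) + (if k = j then - t else 0)) = 1"
    using assms(1) by (simp add: sum.distrib simplexK_def)
  ultimately show ?thesis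
    unfolding simplexK_def mem_Collect_eq comp by simp
qed

text \<open>Moving mass \<open>t\<close> from coordinate \<open>j\<close> to coordinate \<open>i\<close> stays in the simplex for small \<open>t\<close>,
  so the directional derivative of \<open>H\<close> in direction \<open>e\<^sub>i - e\<^sub>j\<close> vanishes at an interior maximiser.\<close>
lemma Hobj_partials_eq_at_interior_max:
  fixes ths :: "real^'k"
  assumes pos: "\<forall>k. ths$k > 0" and sx: "ths \<in> simplexK"
    and y: "\<forall>v<V. (\<Sum>l\<in>UNIV. ths$l * phi l v) > 0"
    and max: "\<forall>th\<in>simplexK. Hobj V p phi th \<le> Hobj V p phi ths"
  shows "(\<Sum>v<V. p v * (phi i v / (\<Sum>l\<in>UNIV. ths$l * phi l v)))
       = (\<Sum>v<V. p v * (phi j v / (\<Sum>l\<in>UNIV. ths$l * phi l v)))"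
proof (cases "i = j")
  case False
  define y where "y v = (\<Sum>l\<in>UNIV. ths$l * phi l v)" for v
  define f where "f t = Hobj V p phi (ths + t *\<^sub>R axis i 1 + (- t) *\<^sub>R axis j 1)" for t
  have "f = (\<lambda>t. \<Sum>v<V. p v * ln (y v + t * (phi i v - phi j v)))"
    unfolding f_def Hobj_def sum_axis_shift y_def by (simp add: fun_eq_iff algebra_simps)
  then have D: "(f has_real_derivative (\<Sum>v<V. p v * ((phi i v - phi j v) / y v))) (at 0)"
    using y has_real_derivative_sum_ln_affine[of V y p] by (simp add: y_def)
  have "0 < min (ths$i) (ths$j)"
    using pos by simp
  moreover have "\<forall>t. \<bar>0 - t\<bar> < min (ths$i) (ths$j) \<longrightarrow> f t \<le> f 0"
  proof (intro allI impI)
    fix t assume "\<bar>0 - t\<bar> < min (ths$i) (ths$j)"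
    then have "ths + t *\<^sub>R axis i 1 + (- t) *\<^sub>R axis j 1 \<in> simplexK"
      by (intro simplexK_exchange[OF sx False]) auto
    then show "f t \<le> f 0"
      using max by (simp add: f_def)
  qed
  ultimately have "(\<Sum>v<V. p v * ((phi i v - phi j v) / y v)) = 0"
    by (rule DERIV_local_max[OF D])
  then show ?thesis
    by (simp add: y_def diff_divide_distrib right_diff_distrib sum_subtractf)
qed simp

lemma Hobj_gradient_at_interior_max:
  fixes ths :: "real^'k"
  assumes pos: "\<forall>k. ths$k > 0" and sx: "ths \<in> simplexK"
    and y: "\<forall>v<V. (\<Sum>l\<in>UNIV. ths$l * phi l v) > 0"
    and psum: "(\<Sum>v<V. p v) = 1"
    and max: "\<forall>th\<in>simplexK. Hobj V p phi th \<le> Hobj V p phi ths"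
  shows "(\<Sum>v<V. p v * (phi k v / (\<Sum>l\<in>UNIV. ths$l * phi l v))) = 1"
proof -
  define y where "y v = (\<Sum>l\<in>UNIV. ths$l * phi l v)" for v
  define g where "g k = (\<Sum>v<V. p v * (phi k v / y v))" for k
  have "(\<Sum>l\<in>UNIV. ths$l * g l) = (\<Sum>l\<in>UNIV. \<Sum>v<V. p v * (ths$l * phi l v) / y v)"
    by (simp add: g_def sum_distrib_left mult_ac)
  also have "\<dots> = (\<Sum>v<V. \<Sum>l\<in>UNIV. p v * (ths$l * phi l v) / y v)"
    by (rule sum.swap)
  also have "\<dots> = (\<Sum>v<V. p v)"
  proof (rule sum.cong)
    fix v assume "v \<in> {..<V}"
    then have "y v > 0"
      using y by (simp add: y_def)
    have "(\<Sum>l\<in>UNIV. p v * (ths$l * phi l v) / y v) = p v * y v / y v"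
      by (simp add: y_def sum_distrib_left sum_divide_distrib)
    also have "\<dots> = p v"
      using \<open>y v > 0\<close> by simp
    finally show "(\<Sum>l\<in>UNIV. p v * (ths$l * phi l v) / y v) = p v" .
  qed simp
  also have "\<dots> = 1"
    by (rule psum)
  finally have sum_one: "(\<Sum>l\<in>UNIV. ths$l * g l) = 1" .
  define c where "c = g k"
  have "g l = c" for l
    unfolding c_def g_def y_def by (rule Hobj_partials_eq_at_interior_max[OF pos sx y max])
  then have "(\<Sum>l\<in>UNIV. ths$l * g l) = (\<Sum>l\<in>UNIV. ths$l) * c"
    by (simp add: sum_distrib_right)
  moreover have "(\<Sum>l\<in>UNIV. ths$l) = 1"
    using sx by (simp add: simplexK_def)
  ultimately have "c = 1"
    using sum_one by simp
  then show ?thesis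
    by (simp add: c_def g_def y_def)
qed

lemma sparsity_dominates:
  assumes "\<forall>k v. v < V \<longrightarrow> phi k v > 0" "v < V"
  shows "(\<Sum>j\<in>UNIV - {kmax phi v}. phi j v) \<le> sparsity V phi * phi (kmax phi v) v"
proof -
  have "(\<Sum>j\<in>UNIV - {kmax phi v}. phi j v) / phi (kmax phi v) v \<le> sparsity V phi"
    unfolding sparsity_def using assms(2) by (intro Max_ge) auto
  then show ?thesis
    using assms by (simp add: divide_le_eq)
qed

lemma sparsity_nonneg:
  assumes "\<forall>k v. v < V \<longrightarrow> phi k v > 0" "V \<ge> 1"
  shows "0 \<le> sparsity V phi"
proof -
  have "0 \<le> (\<Sum>j\<in>UNIV - {kmax phi 0}. phi j 0)"
    using assms by (intro sum_nonneg) (auto intro: less_imp_le)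
  also have "\<dots> \<le> sparsity V phi * phi (kmax phi 0) 0"
    using assms by (intro sparsity_dominates) auto
  finally have "0 \<le> sparsity V phi * phi (kmax phi 0) 0" .
  moreover have "0 < phi (kmax phi 0) 0"
    using assms by simp
  ultimately show ?thesis
    by (simp add: zero_le_mult_iff)
qed

section \<open>A mixture column with a dominant component\<close>

locale dominant_mixture =
  fixes th :: "real^'k" and w :: "'k \<Rightarrow> real" and k0 :: 'k and e :: real
  assumes th_pos: "\<forall>k. th$k > 0" and w_pos: "\<forall>k. w k > 0"
    and dominant: "(\<Sum>j\<in>UNIV - {k0}. w j) \<le> e * w k0" and e_nonneg: "0 \<le> e"
begin

definition ratio :: "'k \<Rightarrow> real" where
  "ratio j = w j / (\<Sum>k\<in>UNIV. th$k * w k)"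

lemma mixture_ge: "th$j * w j \<le> (\<Sum>k\<in>UNIV. th$k * w k)"
  using th_pos w_pos by (intro member_le_sum) (auto intro: less_imp_le)

lemma mixture_pos: "(\<Sum>k\<in>UNIV. th$k * w k) > 0"
  using mixture_ge[of k0] mult_pos_pos[OF th_pos[rule_format, of k0] w_pos[rule_format, of k0]]
  by linarith

lemma ratio_nonneg: "0 \<le> ratio j"
  using mixture_pos w_pos by (simp add: ratio_def less_imp_le)

lemma ratio_le_inverse: "ratio j \<le> 1 / th$j"
  using mixture_ge[of j] mixture_pos th_pos by (simp add: ratio_def field_simps)

lemma ratio_minor_le:
  assumes "j \<noteq> k0"
  shows "ratio j \<le> e / th$k0"
proof -
  have "w j \<le> (\<Sum>j\<in>UNIV - {k0}. w j)"
    using assms w_pos by (intro member_le_sum) (auto intro: less_imp_le)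
  then have "ratio j \<le> e * w k0 / (\<Sum>k\<in>UNIV. th$k * w k)"
    unfolding ratio_def using dominant mixture_pos by (simp add: divide_right_mono)
  also have "\<dots> \<le> e * w k0 / (th$k0 * w k0)"
    using mixture_ge[of k0] e_nonneg th_pos w_pos mixture_pos
    by (intro divide_left_mono) (simp_all add: less_imp_le)
  finally show ?thesis
    using w_pos[rule_format, of k0] by simp
qed

lemma Max_nonneg: "0 \<le> Max (range (($) th))"
  using Max_range_vec_ge[of th k0] th_pos[rule_format, of k0] by linarith

lemma div_le_div_Min: "e / th$k \<le> e / Min (range (($) th))"
  by (rule divide_left_mono[OF Min_range_vec_le e_nonneg
        mult_pos_pos[OF th_pos[rule_format] Min_range_vec_pos[OF th_pos]]])

lemma major_defect_le: "1 - th$k0 * ratio k0 \<le> Max (range (($) th)) * e * ratio k0"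
proof -
  let ?M = "Max (range (($) th))" and ?y = "\<Sum>k\<in>UNIV. th$k * w k"
  have "?y - th$k0 * w k0 = (\<Sum>j\<in>UNIV - {k0}. th$j * w j)"
    by (simp add: sum_diff1)
  also have "\<dots> \<le> (\<Sum>j\<in>UNIV - {k0}. ?M * w j)"
    using Max_range_vec_ge[of th] w_pos by (intro sum_mono mult_right_mono) (auto intro: less_imp_le)
  also have "\<dots> \<le> ?M * e * w k0"
    using dominant Max_nonneg by (simp add: sum_distrib_left[symmetric] mult_left_mono mult.assoc)
  finally have "(?y - th$k0 * w k0) / ?y \<le> ?M * e * w k0 / ?y"
    using mixture_pos by (simp add: divide_right_mono)
  then show ?thesis
    using mixture_pos by (simp add: ratio_def diff_divide_distrib)
qed

lemma ratio_mult_le_one: "th$i * ratio i \<le> 1"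
  using ratio_le_inverse[of i] th_pos[rule_format, of i] by (simp add: field_simps)

lemma diag_term_major_le: "ratio k0 * (1 - th$k0 * ratio k0) \<le> C2max th * e"
proof -
  let ?m = "Min (range (($) th))" and ?M = "Max (range (($) th))"
  have "0 < th$k0"
    using th_pos by simp
  have "1 - th$k0 * ratio k0 \<le> ?M * e * ratio k0"
    by (rule major_defect_le)
  also have "\<dots> \<le> ?M * e * (1 / th$k0)"
    using ratio_le_inverse[of k0] Max_nonneg e_nonneg by (intro mult_left_mono) auto
  finally have "ratio k0 * (1 - th$k0 * ratio k0) \<le> (1 / th$k0) * (?M * e * (1 / th$k0))"
    using ratio_le_inverse[of k0] ratio_nonneg[of k0] ratio_mult_le_one[of k0] \<open>0 < th$k0\<close>
    by (intro mult_mono) auto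
  also have "\<dots> = ?M * e / (th$k0)\<^sup>2"
    by (simp add: power2_eq_square)
  also have "\<dots> \<le> ?M * e / ?m\<^sup>2"
  proof -
    have "?m\<^sup>2 \<le> (th$k0)\<^sup>2"
      by (rule power_mono[OF Min_range_vec_le less_imp_le[OF Min_range_vec_pos[OF th_pos]]])
    moreover have "0 < (th$k0)\<^sup>2 * ?m\<^sup>2"
      using \<open>0 < th$k0\<close> Min_range_vec_pos[OF th_pos] by (metis mult_pos_pos zero_less_power)
    ultimately show ?thesis
      using Max_nonneg e_nonneg by (intro divide_left_mono) auto
  qed
  finally show ?thesis
    by (simp add: C2max_def)
qed

lemma diag_term_minor_le:
  assumes "i \<noteq> k0"
  shows "ratio i * (1 - th$i * ratio i) \<le> C2max th * e"
proof -
  have "ratio i * (1 - th$i * ratio i) \<le> ratio i"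
    using ratio_nonneg[of i] th_pos[rule_format, of i] by (simp add: mult_left_le)
  also have "\<dots> \<le> e / th$k0"
    using ratio_minor_le[OF assms] .
  also have "\<dots> \<le> (1 / Min (range (($) th))) * e"
    using div_le_div_Min[of k0] by simp
  also have "\<dots> \<le> C2max th * e"
    using C2max_ge_inverse_Min[OF th_pos] e_nonneg by (rule mult_right_mono)
  finally show ?thesis .
qed

lemma diag_term_bounds:
  "0 \<le> ratio i * (1 - th$i * ratio i) \<and> ratio i * (1 - th$i * ratio i) \<le> C2max th * e"
  using ratio_nonneg[of i] ratio_mult_le_one[of i] diag_term_major_le diag_term_minor_le[of i]
  by (cases "i = k0") auto

lemma offdiag_term_major_le:
  assumes "j \<noteq> k0"
  shows "sqrt (th$k0) * sqrt (th$j) * (ratio k0 * ratio j) \<le> C1max th * e"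
proof -
  have "ratio k0 * ratio j \<le> (1 / th$k0) * (e / th$k0)"
    using ratio_nonneg ratio_le_inverse[of k0] ratio_minor_le[OF assms] th_pos
    by (intro mult_mono) (simp_all add: less_imp_le)
  then have "sqrt (th$k0) * sqrt (th$j) * (ratio k0 * ratio j)
      \<le> sqrt (th$k0) * sqrt (th$j) * ((1 / th$k0) * (e / th$k0))"
    by (rule mult_left_mono) (simp add: th_pos[rule_format, THEN less_imp_le])
  also have "\<dots> = sqrt (th$k0) * sqrt (th$j) / (th$k0)\<^sup>2 * e"
    by (simp add: power2_eq_square)
  also have "\<dots> \<le> C1max th * e"
    using C1max_ge[OF th_pos] e_nonneg by (rule mult_right_mono)
  finally show ?thesis .
qed

lemma offdiag_term_minor_le:
  assumes "i \<noteq> k0" "j \<noteq> k0"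
  shows "sqrt (th$i) * sqrt (th$j) * (ratio i * ratio j) \<le> C2max th * e\<^sup>2"
proof -
  let ?m = "Min (range (($) th))" and ?M = "Max (range (($) th))"
  have sqrt_le: "sqrt (th$i) * sqrt (th$j) \<le> sqrt ?M * sqrt ?M"
    using Max_range_vec_ge[of th i] Max_range_vec_ge[of th j] th_pos[rule_format, of i]
      th_pos[rule_format, of j] Max_nonneg
    by (intro mult_mono) auto
  have "ratio k \<le> e / ?m" if "k \<noteq> k0" for k
    using ratio_minor_le[OF that] div_le_div_Min[of k0] by linarith
  then have ratio_le: "ratio i * ratio j \<le> (e / ?m) * (e / ?m)"
    using assms ratio_nonneg divide_nonneg_pos[OF e_nonneg Min_range_vec_pos[OF th_pos]]
    by (intro mult_mono) auto
  have "sqrt (th$i) * sqrt (th$j) * (ratio i * ratio j) \<le> sqrt ?M * sqrt ?M * ((e / ?m) * (e / ?m))"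
    by (rule mult_mono[OF sqrt_le ratio_le]) (simp_all add: Max_nonneg ratio_nonneg)
  also have "\<dots> = C2max th * e\<^sup>2"
    using Max_nonneg by (simp add: C2max_def power2_eq_square)
  finally show ?thesis .
qed

lemma offdiag_term_bounds:
  assumes "i \<noteq> j"
  shows "0 \<le> sqrt (th$i) * sqrt (th$j) * (ratio i * ratio j)
    \<and> sqrt (th$i) * sqrt (th$j) * (ratio i * ratio j) \<le> C1max th * e + C2max th * e\<^sup>2"
proof -
  have "0 \<le> C1max th * e" "0 \<le> C2max th * e\<^sup>2"
    using C1max_pos[OF th_pos] C2max_pos[OF th_pos] e_nonneg by simp_all
  moreover consider "k0 = i" | "k0 = j" | "i \<noteq> k0" "j \<noteq> k0"
    by blast
  then have "sqrt (th$i) * sqrt (th$j) * (ratio i * ratio j) \<le> C1max th * e + C2max th * e\<^sup>2"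
  proof cases
    case 1
    then show ?thesis
      using offdiag_term_major_le[of j] assms \<open>0 \<le> C2max th * e\<^sup>2\<close> by auto
  next
    case 2
    then show ?thesis
      using offdiag_term_major_le[of i] assms \<open>0 \<le> C2max th * e\<^sup>2\<close> by (auto simp: mult_ac)
  next
    case 3
    then show ?thesis
      using offdiag_term_minor_le[OF 3] \<open>0 \<le> C1max th * e\<close> by linarith
  qed
  moreover have "0 \<le> sqrt (th$i) * sqrt (th$j) * (ratio i * ratio j)"
    using ratio_nonneg[of i] ratio_nonneg[of j] th_pos[rule_format, of i] th_pos[rule_format, of j]
    by simp
  ultimately show ?thesis
    by simp
qed

end

section \<open>The scaled Hessian of a sparse model\<close>

lemma abs_weighted_mean_le:
  fixes p f :: "nat \<Rightarrow> real"
  assumes "\<forall>v<V. 0 \<le> p v" "(\<Sum>v<V. p v) = 1" "\<And>v. v < V \<Longrightarrow> 0 \<le> f v \<and> f v \<le> c"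
  shows "\<bar>\<Sum>v<V. p v * f v\<bar> \<le> c"
proof -
  have "0 \<le> (\<Sum>v<V. p v * f v)"
    using assms by (intro sum_nonneg) auto
  moreover have "(\<Sum>v<V. p v * f v) \<le> (\<Sum>v<V. p v * c)"
    using assms by (intro sum_mono mult_left_mono) auto
  ultimately show ?thesis
    using assms(2) by (simp flip: sum_distrib_right)
qed

locale sparse_mixture =
  fixes V :: nat and p :: "nat \<Rightarrow> real" and phi :: "'k::finite \<Rightarrow> nat \<Rightarrow> real"
    and th :: "real^'k" and \<kappa> :: "nat \<Rightarrow> 'k" and e :: real
  assumes th_pos: "\<forall>k. th$k > 0" and phi_pos: "\<forall>k v. v < V \<longrightarrow> phi k v > 0"
    and p_nonneg: "\<forall>v<V. 0 \<le> p v" and p_sum: "(\<Sum>v<V. p v) = 1"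
    and dominant: "\<forall>v<V. (\<Sum>j\<in>UNIV - {\<kappa> v}. phi j v) \<le> e * phi (\<kappa> v) v"
    and e_nonneg: "0 \<le> e"
    and stationary: "\<forall>k. (\<Sum>v<V. p v * (phi k v / (\<Sum>l\<in>UNIV. th$l * phi l v))) = 1"
begin

abbreviation defect :: "real^'k^'k" where
  "defect \<equiv> scaled_defect th (hessian (Hobj V p phi) th)"

lemma dominant_mixture_at: "v < V \<Longrightarrow> dominant_mixture th (\<lambda>k. phi k v) (\<kappa> v) e"
  by unfold_locales (use th_pos phi_pos dominant e_nonneg in auto)

definition lik_ratio :: "'k \<Rightarrow> nat \<Rightarrow> real" where
  "lik_ratio i v = phi i v / (\<Sum>l\<in>UNIV. th$l * phi l v)"

lemma lik_ratio_diag_bounds: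
  "v < V \<Longrightarrow> 0 \<le> lik_ratio i v * (1 - th$i * lik_ratio i v)
    \<and> lik_ratio i v * (1 - th$i * lik_ratio i v) \<le> C2max th * e"
  using dominant_mixture.diag_term_bounds[OF dominant_mixture_at]
  by (simp add: dominant_mixture.ratio_def[OF dominant_mixture_at] lik_ratio_def)

lemma lik_ratio_offdiag_bounds:
  "v < V \<Longrightarrow> i \<noteq> j \<Longrightarrow> 0 \<le> sqrt (th$i) * sqrt (th$j) * (lik_ratio i v * lik_ratio j v)
    \<and> sqrt (th$i) * sqrt (th$j) * (lik_ratio i v * lik_ratio j v) \<le> C1max th * e + C2max th * e\<^sup>2"
  using dominant_mixture.offdiag_term_bounds[OF dominant_mixture_at]
  by (simp add: dominant_mixture.ratio_def[OF dominant_mixture_at] lik_ratio_def)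

lemma defect_entry:
  "defect $ i $ j = sqrt (th$i) * sqrt (th$j) * (\<Sum>v<V. p v * (lik_ratio i v * lik_ratio j v))
    - (if i = j then 1 else 0)"
proof -
  have "\<forall>v<V. (\<Sum>l\<in>UNIV. th$l * phi l v) > 0"
    using dominant_mixture.mixture_pos[OF dominant_mixture_at] by blast
  then show ?thesis
    by (simp add: scaled_defect_def hessian_Hobj lik_ratio_def power2_eq_square)
qed

lemma defect_diag_le: "\<bar>defect $ i $ i\<bar> \<le> C2max th * e"
proof -
  have "(\<Sum>v<V. p v * lik_ratio i v) = 1"
    using stationary by (simp add: lik_ratio_def)
  then have "defect $ i $ i = - (\<Sum>v<V. p v * (lik_ratio i v * (1 - th$i * lik_ratio i v)))"
    using th_pos[rule_format, of i]
    by (simp add: defect_entry algebra_simps sum_subtractf sum_distrib_left less_imp_le)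
  also have "\<bar>\<dots>\<bar> \<le> C2max th * e"
    unfolding abs_minus_cancel using p_nonneg p_sum lik_ratio_diag_bounds
    by (rule abs_weighted_mean_le)
  finally show ?thesis .
qed

lemma defect_offdiag_le:
  assumes "i \<noteq> j"
  shows "\<bar>defect $ i $ j\<bar> \<le> e * (2 * C1max th + C2max th * e)"
proof -
  have "\<bar>defect $ i $ j\<bar> = \<bar>\<Sum>v<V. p v * (sqrt (th$i) * sqrt (th$j) * (lik_ratio i v * lik_ratio j v))\<bar>"
    using assms by (simp add: defect_entry sum_distrib_left mult_ac)
  also have "\<dots> \<le> C1max th * e + C2max th * e\<^sup>2"
    using p_nonneg p_sum lik_ratio_offdiag_bounds[OF _ assms] by (rule abs_weighted_mean_le)
  also have "\<dots> \<le> e * (2 * C1max th + C2max th * e)"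
    using C1max_pos[OF th_pos] e_nonneg by (simp add: algebra_simps power2_eq_square)
  finally show ?thesis .
qed

lemma defect_symmetric: "transpose defect = defect"
proof -
  have "\<forall>v<V. (\<Sum>l\<in>UNIV. th$l * phi l v) > 0"
    using dominant_mixture.mixture_pos[OF dominant_mixture_at] by blast
  then show ?thesis
    by (simp add: vec_eq_iff transpose_def scaled_defect_def hessian_Hobj mult_ac)
qed

lemma power2_norm_defect_le: "(norm defect)\<^sup>2 \<le> e\<^sup>2 * Ffun th e"
proof -
  define X where "X = CARD('k) * (C2max th * e)\<^sup>2"
  define Y where "Y = CARD('k) * (real CARD('k) - 1) * (e * (2 * C1max th + C2max th * e))\<^sup>2"
  have "(norm defect)\<^sup>2 \<le> X + Y"
    unfolding X_def Y_def by (rule power2_norm_matrix_le[OF defect_diag_le defect_offdiag_le])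
  moreover have "e\<^sup>2 * Ffun th e = 4 * X + Y"
    by (simp add: X_def Y_def Ffun_def power2_eq_square algebra_simps)
  moreover have "0 \<le> X"
    by (simp add: X_def)
  ultimately show ?thesis
    by linarith
qed

lemma rho2_hessian_ge:
  assumes "e < eps0 th"
  shows "exp (- (CARD('k) * Ffun th (eps0 th) * e\<^sup>2)) \<le> rho2 (hessian (Hobj V p phi) th) (Rmat th)"
proof -
  have "e\<^sup>2 * Ffun th e = (e * sqrt (Ffun th e))\<^sup>2"
    using Ffun_pos[OF th_pos, of e] by (simp add: power_mult_distrib)
  also have "\<dots> < (1/2)\<^sup>2"
    using mult_sqrt_Ffun_lt_half[OF th_pos e_nonneg assms] Ffun_pos[OF th_pos, of e] e_nonneg
    by (intro power_strict_mono) auto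
  finally have "(norm defect)\<^sup>2 < (1/2)\<^sup>2"
    using power2_norm_defect_le by linarith
  then have "norm defect < 1/2"
    by (rule power_less_imp_less_base) simp
  have "e\<^sup>2 * Ffun th e \<le> e\<^sup>2 * Ffun th (eps0 th)"
    using Ffun_mono[OF th_pos e_nonneg, of "eps0 th"] assms by (intro mult_left_mono) auto
  then have "CARD('k) * (norm defect)\<^sup>2 \<le> CARD('k) * Ffun th (eps0 th) * e\<^sup>2"
    using power2_norm_defect_le by (simp add: mult_ac)
  then have "exp (- (CARD('k) * Ffun th (eps0 th) * e\<^sup>2)) \<le> exp (- (CARD('k) * (norm defect)\<^sup>2))"
    by simp
  also have "\<dots> \<le> rho2 (mat 1 + defect) (mat 1)"
    using \<open>norm defect < 1/2\<close> by (intro rho2_symmetric_perturbation_ge defect_symmetric) simp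
  also have "\<dots> = rho2 (hessian (Hobj V p phi) th) (Rmat th)"
    by (rule rho2_Rmat_eq[OF th_pos, symmetric])
  finally show ?thesis .
qed

end

lemma sparse_mixture_at_interior_max:
  assumes "ths \<in> simplexK" "\<forall>k. ths$k > 0" "V \<ge> 1" and phi_pos: "\<forall>k v. v < V \<longrightarrow> phi k v > 0"
    and "prob_vec V p" and max: "\<forall>th\<in>simplexK. Hobj V p phi th \<le> Hobj V p phi ths"
  shows "sparse_mixture V p phi ths (kmax phi) (sparsity V phi)"
proof
  show "\<forall>v<V. 0 \<le> p v" "(\<Sum>v<V. p v) = 1"
    using \<open>prob_vec V p\<close> by (simp_all add: prob_vec_def)
  have "\<forall>v<V. (\<Sum>l\<in>UNIV. ths$l * phi l v) > 0"
    using phi_pos assms(2) by (auto intro!: sum_pos)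
  then show "\<forall>k. (\<Sum>v<V. p v * (phi k v / (\<Sum>l\<in>UNIV. ths$l * phi l v))) = 1"
    using Hobj_gradient_at_interior_max[OF assms(2,1) _ \<open>(\<Sum>v<V. p v) = 1\<close> max] by blast
  show "\<forall>v<V. (\<Sum>j\<in>UNIV - {kmax phi v}. phi j v) \<le> sparsity V phi * phi (kmax phi v) v"
    using sparsity_dominates[OF phi_pos] by blast
  show "0 \<le> sparsity V phi"
    by (rule sparsity_nonneg[OF phi_pos \<open>V \<ge> 1\<close>])
qed (use assms in auto)

theorem theorem6:
  fixes ths :: "real^'k"
  assumes "CARD('k) > 3"
    and "ths \<in> simplexK"
    and "\<forall>k. ths $ k > 0"
  shows "\<exists>C>0. \<forall>(V::nat) (phi::'k \<Rightarrow> nat \<Rightarrow> real) (p::nat \<Rightarrow> real).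
           V \<ge> 1 \<and> (\<forall>k. prob_vec V (phi k)) \<and> (\<forall>k v. v < V \<longrightarrow> phi k v > 0)
           \<and> prob_vec V p
           \<and> (\<forall>th\<in>simplexK. Hobj V p phi th \<le> Hobj V p phi ths)
           \<and> B1 V phi \<and> sparsity V phi < eps0 ths
           \<longrightarrow> rho2 (hessian (Hobj V p phi) ths) (Rmat ths) \<ge> exp (- (C^2 * (sparsity V phi)^2))"
proof -
  define C where "C = sqrt (CARD('k) * Ffun ths (eps0 ths))"
  have "0 < CARD('k) * Ffun ths (eps0 ths)"
    using Ffun_pos[OF assms(3)] by simp
  then have C: "C > 0" "C\<^sup>2 = CARD('k) * Ffun ths (eps0 ths)"
    by (simp_all add: C_def)
  show ?thesis
  proof (intro exI[of _ C] conjI allI impI)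
    fix V phi p
    assume H: "V \<ge> 1 \<and> (\<forall>k. prob_vec V (phi k)) \<and> (\<forall>k v. v < V \<longrightarrow> phi k v > 0) \<and> prob_vec V p
      \<and> (\<forall>th\<in>simplexK. Hobj V p phi th \<le> Hobj V p phi ths) \<and> B1 V phi \<and> sparsity V phi < eps0 ths"
    interpret sparse_mixture V p phi ths "kmax phi" "sparsity V phi"
      by (rule sparse_mixture_at_interior_max[OF assms(2,3)]) (use H in auto)
    show "exp (- (C\<^sup>2 * (sparsity V phi)\<^sup>2)) \<le> rho2 (hessian (Hobj V p phi) ths) (Rmat ths)"
      unfolding C(2) using H by (intro rho2_hessian_ge) simp
  qed (rule C(1))
qed

end
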